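(* In the standard LLP setup, for every $N\ge1$: $L(G,\gamma^N_{optm})\supseteq L(G,\gamma^{N+1}_{optm})$.
   Context: Standard LLP setup. $\Sigma=\Sigma_c\,\dot\cup\,\Sigma_{uc}$ is a finite alphabet partitioned into controllable and uncontrollable events. The plant $G$ has generated language $L(G)\subseteq\Sigma^*$ and marked language $L_m(G)\subseteq L(G)$ with $L(G)=\overline{L_m(G)}$, where $\overline{M}$ denotes the set of all prefixes of strings in $M$. The legal language $K\subseteq L_m(G)$ satisfies $K=\overline{K}\cap L_m(G)$. For a prefix-closed language $L$, a language $M$ is controllable w.r.t. $L$ if $\overline{M}\Sigma_{uc}\cap L\subseteq\overline{M}$. For a language $L$ and $s\in\Sigma^*$: $L/s=\{t\in\Sigma^*: st\in L\}$; $L|_N=\{t\in L: |t|\le N\}$; $\Sigma_{L(G)}(s)=\{\sigma\in\Sigma: s\sigma\in L(G)\}$. For $M\subseteq\Sigma^*$, $M^{\uparrow/s|_N}$ denotes the supremal sublanguage of $M$ controllable w.r.t. $L(G)/s|_N$. The optimistic attitude gives $f^N_{optm}(s)=[K/s|_N\cup(\overline{K}/s|_N\setminus\overline{K}/s|_{N-1})]^{\uparrow/s|_N}$, and the LLP control policy is $\gamma^N_{optm}(s)=(\overline{f^N_{optm}(s)}\cap\Sigma)\cup(\Sigma_{uc}\cap\Sigma_{L(G)}(s))$. For a control policy $\gamma:\Sigma^*\to2^\Sigma$, $L(G,\gamma)$ is defined by $\epsilon\in L(G,\gamma)$ and $s\sigma\in L(G,\gamma)$ iff $s\in L(G,\gamma)$,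 $s\sigma\in L(G)$, $\sigma\in\gamma(s)$. *)

theory Defs
  imports Main
begin

text \<open>Strings over the alphabet 'a are lists; the alphabet is the (finite) type 'a,
  partitioned into uncontrollable events Sigma_uc and controllable events UNIV - Sigma_uc.\<close>

definition pref :: "'a list set \<Rightarrow> 'a list set" where
  "pref M = {s. \<exists>t. s @ t \<in> M}"

definition quot :: "'a list set \<Rightarrow> 'a list \<Rightarrow> 'a list set" where
  "quot L s = {t. s @ t \<in> L}"

definition trunc :: "'a list set \<Rightarrow> nat \<Rightarrow> 'a list set" where
  "trunc L N = {t \<in> L. length t \<le> N}"

definition controllable :: "'a set \<Rightarrow> 'a list set \<Rightarrow> 'a list set \<Rightarrow> bool" where
  "controllable Sigma_uc M L \<longleftrightarrow> (\<forall>s \<in> pref M. \<forall>\<sigma> \<in> Sigma_uc. s @ [\<sigma>] \<in> L \<longrightarrow> s @ [\<sigma>] \<in> pref M)"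

definition supC :: "'a set \<Rightarrow> 'a list set \<Rightarrow> 'a list set \<Rightarrow> 'a list set" where
  "supC Sigma_uc M L = \<Union>{M'. M' \<subseteq> M \<and> controllable Sigma_uc M' L}"

definition f_optm :: "'a set \<Rightarrow> 'a list set \<Rightarrow> 'a list set \<Rightarrow> nat \<Rightarrow> 'a list \<Rightarrow> 'a list set" where
  "f_optm Sigma_uc LG K N s =
     supC Sigma_uc (trunc (quot K s) N \<union> (trunc (quot (pref K) s) N - trunc (quot (pref K) s) (N - 1)))
              (trunc (quot LG s) N)"

definition gamma_optm :: "'a set \<Rightarrow> 'a list set \<Rightarrow> 'a list set \<Rightarrow> nat \<Rightarrow> 'a list \<Rightarrow> 'a set" where
  "gamma_optm Sigma_uc LG K N s =
     {\<sigma>. [\<sigma>] \<in> pref (f_optm Sigma_uc LG K N s)} \<union> (Sigma_uc \<inter> {\<sigma>. s @ [\<sigma>] \<in> LG})"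

inductive_set closed_loop :: "'a list set \<Rightarrow> ('a list \<Rightarrow> 'a set) \<Rightarrow> 'a list set"
  for LG :: "'a list set" and \<gamma> :: "'a list \<Rightarrow> 'a set" where
  Nil: "[] \<in> closed_loop LG \<gamma>"
| snoc: "s \<in> closed_loop LG \<gamma> \<Longrightarrow> s @ [\<sigma>] \<in> LG \<Longrightarrow> \<sigma> \<in> \<gamma> s \<Longrightarrow> s @ [\<sigma>] \<in> closed_loop LG \<gamma>"

end

theory Submission
  imports Defs
begin

text \<open>Let \<open>M\<close> be a controllable sublanguage of the specification with horizon \<open>N + 1\<close>.
  Cutting \<open>M\<close> at length \<open>N\<close> (keeping its words of length at most \<open>N\<close> together with its
  prefixes of length exactly \<open>N\<close>) yields a sublanguage of the specification with horizon \<open>N\<close>: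
  short words of \<open>M\<close> are legal, and prefixes of length \<open>N \<ge> 1\<close> fall into the optimistic
  boundary term. The cut is again controllable, now with respect to the plant truncated at \<open>N\<close>,
  and it has the same prefixes of length at most \<open>N\<close>. So every event enabled under lookahead
  \<open>N + 1\<close> is enabled under lookahead \<open>N\<close>, and the closed loops are nested.\<close>

lemma subset_pref: "M \<subseteq> pref M"
  unfolding pref_def by (auto intro: exI[of _ "[]"])

lemma pref_pref: "pref (pref M) = pref M"
proof
  show "pref (pref M) \<subseteq> pref M"
  proof
    fix x assume "x \<in> pref (pref M)"
    then obtain t t' where "x @ (t @ t') \<in> M"
      unfolding pref_def by auto
    then show "x \<in> pref M"
      unfolding pref_def by blast
  qed
qed (rule subset_pref)

lemma pref_mono: "A \<subseteq> B \<Longrightarrow> pref A \<subseteq> pref B"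
  unfolding pref_def by blast

lemma pref_supC_iff:
  "x \<in> pref (supC Sigma_uc M L) \<longleftrightarrow> (\<exists>M'. M' \<subseteq> M \<and> controllable Sigma_uc M' L \<and> x \<in> pref M')"
  unfolding pref_def supC_def by blast

definition optm_spec :: "'a list set \<Rightarrow> nat \<Rightarrow> 'a list \<Rightarrow> 'a list set" where
  "optm_spec K N s =
     trunc (quot K s) N \<union> (trunc (quot (pref K) s) N - trunc (quot (pref K) s) (N - 1))"

lemma f_optm_eq_supC_optm_spec:
  "f_optm Sigma_uc LG K N s = supC Sigma_uc (optm_spec K N s) (trunc (quot LG s) N)"
  unfolding f_optm_def optm_spec_def ..

definition cut_lang :: "'a list set \<Rightarrow> nat \<Rightarrow> 'a list set" where
  "cut_lang M N = trunc M N \<union> {u \<in> pref M. length u = N}"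

lemma cut_lang_subset_pref: "cut_lang M N \<subseteq> pref M"
  using subset_pref unfolding cut_lang_def trunc_def by blast

lemma trunc_pref_subset_pref_cut_lang: "trunc (pref M) N \<subseteq> pref (cut_lang M N)"
proof
  fix u assume "u \<in> trunc (pref M) N"
  then obtain w where uw: "u @ w \<in> M" and u_len: "length u \<le> N"
    unfolding trunc_def pref_def by blast
  show "u \<in> pref (cut_lang M N)"
  proof (cases "length (u @ w) \<le> N")
    case True
    then have "u @ w \<in> cut_lang M N"
      using uw unfolding cut_lang_def trunc_def by blast
    then show ?thesis unfolding pref_def by blast
  next
    case False
    have "take N (u @ w) \<in> pref M"
      using uw unfolding pref_def by (metis (mono_tags) append_take_drop_id mem_Collect_eq)
    moreover have "length (take N (u @ w)) = N"
      using False by simp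
    ultimately have "take N (u @ w) \<in> cut_lang M N"
      unfolding cut_lang_def by blast
    moreover have "take N (u @ w) = u @ take (N - length u) w"
      using u_len by simp
    ultimately show ?thesis unfolding pref_def by (metis (mono_tags) mem_Collect_eq)
  qed
qed

lemma controllable_cut_lang:
  assumes "controllable Sigma_uc M L"
  shows "controllable Sigma_uc (cut_lang M N) (trunc L N)"
  unfolding controllable_def
proof (intro ballI impI)
  fix v \<sigma> assume v: "v \<in> pref (cut_lang M N)" and \<sigma>: "\<sigma> \<in> Sigma_uc"
    and v\<sigma>: "v @ [\<sigma>] \<in> trunc L N"
  have "v \<in> pref M"
    using v pref_mono[OF cut_lang_subset_pref] pref_pref by blast
  with assms \<sigma> v\<sigma> have "v @ [\<sigma>] \<in> pref M"
    unfolding controllable_def trunc_def by blast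
  with v\<sigma> have "v @ [\<sigma>] \<in> trunc (pref M) N"
    unfolding trunc_def by blast
  then show "v @ [\<sigma>] \<in> pref (cut_lang M N)"
    using trunc_pref_subset_pref_cut_lang by blast
qed

lemma cut_lang_subset_optm_spec:
  assumes "M \<subseteq> optm_spec K (N + 1) s" and "N \<ge> 1"
  shows "cut_lang M N \<subseteq> optm_spec K N s"
proof
  fix u assume "u \<in> cut_lang M N"
  then consider "u \<in> M" "length u \<le> N" | "u \<in> pref M" "length u = N"
    unfolding cut_lang_def trunc_def by blast
  then show "u \<in> optm_spec K N s"
  proof cases
    case 1
    with assms(1) have "s @ u \<in> K"
      unfolding optm_spec_def trunc_def quot_def by auto
    with 1 show ?thesis
      unfolding optm_spec_def trunc_def quot_def by blast
  next
    case 2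
    then obtain w where "u @ w \<in> M" unfolding pref_def by blast
    with assms(1) subset_pref[of K] have "s @ u @ w \<in> pref K"
      unfolding optm_spec_def trunc_def quot_def by auto
    then have "s @ u \<in> pref K"
      unfolding pref_def by auto
    with 2 assms(2) show ?thesis
      unfolding optm_spec_def trunc_def quot_def by auto
  qed
qed

lemma trunc_pref_f_optm_Suc_subset:
  assumes "N \<ge> 1"
  shows "trunc (pref (f_optm Sigma_uc LG K (N + 1) s)) N \<subseteq> pref (f_optm Sigma_uc LG K N s)"
proof
  fix x assume "x \<in> trunc (pref (f_optm Sigma_uc LG K (N + 1) s)) N"
  then obtain M where M_spec: "M \<subseteq> optm_spec K (N + 1) s"
    and M_ctrl: "controllable Sigma_uc M (trunc (quot LG s) (N + 1))"
    and x: "x \<in> pref M" "length x \<le> N"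
    unfolding trunc_def f_optm_eq_supC_optm_spec pref_supC_iff by blast
  have "trunc (trunc (quot LG s) (N + 1)) N = trunc (quot LG s) N"
    unfolding trunc_def by auto
  then have "controllable Sigma_uc (cut_lang M N) (trunc (quot LG s) N)"
    using controllable_cut_lang[OF M_ctrl, of N] by simp
  moreover have "x \<in> pref (cut_lang M N)"
    using x trunc_pref_subset_pref_cut_lang unfolding trunc_def by blast
  ultimately show "x \<in> pref (f_optm Sigma_uc LG K N s)"
    unfolding f_optm_eq_supC_optm_spec pref_supC_iff
    using cut_lang_subset_optm_spec[OF M_spec assms] by blast
qed

lemma gamma_optm_Suc_subset:
  assumes "N \<ge> 1"
  shows "gamma_optm Sigma_uc LG K (N + 1) s \<subseteq> gamma_optm Sigma_uc LG K N s"
  using trunc_pref_f_optm_Suc_subset[OF assms] assms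
  unfolding gamma_optm_def trunc_def by fastforce

lemma closed_loop_mono:
  assumes "\<And>s. \<gamma> s \<subseteq> \<gamma>' s"
  shows "closed_loop LG \<gamma> \<subseteq> closed_loop LG \<gamma>'"
proof
  fix s assume "s \<in> closed_loop LG \<gamma>"
  then show "s \<in> closed_loop LG \<gamma>'"
    by induction (use assms in \<open>auto intro: closed_loop.intros\<close>)
qed

theorem theorem2:
  fixes Sigma_uc :: "('a::finite) set" and LG Lm K :: "'a list set" and N :: nat
  assumes "Lm \<subseteq> LG" and "LG = pref Lm"
    and "K \<subseteq> Lm" and "K = pref K \<inter> Lm"
    and "N \<ge> 1"
  shows "closed_loop LG (gamma_optm Sigma_uc LG K (N + 1)) \<subseteq> closed_loop LG (gamma_optm Sigma_uc LG K N)"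
  using closed_loop_mono gamma_optm_Suc_subset[OF assms(5)] by metis

end
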